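(* Let $g(x)=\dfrac{1}{1-\cos(x)}$ for $x\in(0,2\pi)$. (i) Let $n\ge0$ be an even integer. For all $x,y>0$ with $x+y\le\pi$, $$\lambda_n\le g^{(n)}(x)+g^{(n)}(y)-g^{(n)}(x+y),\qquad \lambda_n=\frac{2}{n+2}\,(2^{n+2}-1)^2\,|B_{n+2}|,$$ and $\lambda_n$ is the best possible lower bound (i.e., the largest constant, depending only on $n$, for which the inequality holds for all such $x,y$). (ii) Let $n\ge1$ be an odd integer. For all $x,y>0$ with $x+y\le\pi$, $$\mu_n\le g^{(n)}(x+y)-g^{(n)}(x)-g^{(n)}(y),\qquad \mu_n=2\,|E_{n+1}|,$$ and $\mu_n$ is the best possible lower bound (i.e., the largest constant, depending only on $n$, for which the inequality holds for all such $x,y$).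
   Context: $B_m$ denotes the $m$-th Bernoulli number (defined by $\frac{t}{e^t-1}=\sum_{m\ge0}B_m\frac{t^m}{m!}$) and $E_m$ denotes the $m$-th Euler number (defined by $\frac{1}{\cosh t}=\sum_{m\ge0}E_m\frac{t^m}{m!}$). *)

theory Defs
  imports "HOL-Analysis.Analysis" "HOL-Computational_Algebra.Formal_Power_Series"
begin

definition bernoulli_num :: "nat \<Rightarrow> real" where
  "bernoulli_num m = fact m * fps_nth (fps_X / (fps_exp 1 - 1)) m"

definition fps_cosh_real :: "real fps" where
  "fps_cosh_real = fps_const (1/2) * (fps_exp 1 + fps_exp (-1))"

definition euler_num :: "nat \<Rightarrow> real" where
  "euler_num m = fact m * fps_nth (inverse fps_cosh_real) m"

definition g_fun :: "real \<Rightarrow> real" where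
  "g_fun x = 1 / (1 - cos x)"

end

theory Submission
  imports Defs "HOL-Computational_Algebra.Polynomial"
begin

text \<open>
  With \<open>c = cot (x/2)\<close> we have \<open>g = (1 + c^2)/2\<close> and \<open>dc/dx = -(1 + c^2)/2\<close>, so
  \<open>g^(n)(x) = (-1)^n P_(n+1)(c) / 2^(n+1)\<close>, where \<open>P_n\<close> are the derivative polynomials of \<open>tan\<close>.
  They are nonnegative on \<open>[0, \<infinity>)\<close>, hence \<open>h = (-1)^n g^(n)\<close> is convex on \<open>(0, \<pi>]\<close>.
  For a convex \<open>h\<close> on \<open>(0, a]\<close> the defect \<open>h x + h y - h (x + y)\<close> is smallest at
  \<open>x = y = a/2\<close>: midpoint convexity reduces to \<open>x = y\<close>, and monotonicity of secant slopes
  shows that \<open>2 h (s/2) - h s\<close> decreases in \<open>s\<close>. The extremal value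
  \<open>(2 P_(n+1)(1) - P_(n+1)(0)) / 2^(n+1)\<close> comes from generating functions:
  \<open>\<Sum> P_n(c) t^n/n!\<close> solves \<open>y' = 1 + y^2, y(0) = c\<close>, so it is \<open>tan t\<close> for \<open>c = 0\<close> and
  \<open>sec 2t + tan 2t\<close> for \<open>c = 1\<close>; the Taylor coefficients of \<open>tan\<close> and \<open>sec\<close> are those of
  \<open>t/(e^t - 1)\<close> and \<open>1/cosh t\<close> after the substitution \<open>t \<mapsto> it\<close>.
\<close>

lemma sum_choose_Suc_convolution:
  fixes f g :: "nat \<Rightarrow> 'a::comm_semiring_1"
  shows "(\<Sum>i\<le>n. of_nat (n choose i) * (f (Suc i) * g (n - i) + f i * g (Suc (n - i))))
       = (\<Sum>i\<le>Suc n. of_nat (Suc n choose i) * (f i * g (Suc n - i)))"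
proof -
  have "(\<Sum>i\<le>n. of_nat (n choose i) * (f i * g (Suc (n - i))))
      = f 0 * g (Suc n) + (\<Sum>i\<le>n. of_nat (n choose Suc i) * (f (Suc i) * g (n - i)))"
  proof -
    have "(\<Sum>i<n. of_nat (n choose Suc i) * (f (Suc i) * g (Suc (n - Suc i))))
        = (\<Sum>i\<le>n. of_nat (n choose Suc i) * (f (Suc i) * g (n - i)))"
      by (simp add: lessThan_Suc_atMost[symmetric] Suc_diff_Suc binomial_eq_0)
    then show ?thesis
      by (simp add: sum.atMost_shift)
  qed
  then show ?thesis
    unfolding sum.atMost_Suc_shift
    by (simp add: binomial_Suc_Suc algebra_simps sum.distrib)
qed

lemma derivation_funpow_mult:
  fixes d :: "'a::comm_ring_1 \<Rightarrow> 'a"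
  assumes add: "\<And>a b. d (a + b) = d a + d b"
    and mult: "\<And>a b. d (a * b) = d a * b + a * d b"
  shows "(d ^^ n) (a * b) = (\<Sum>i\<le>n. of_nat (n choose i) * ((d ^^ i) a * (d ^^ (n - i)) b))"
proof -
  have "d 0 = d 0 + d 0" "d 1 = d 1 + d 1"
    using add[of 0 0] mult[of 1 1] by simp_all
  then have d0: "d 0 = 0" and d1: "d 1 = 0"
    by simp_all
  have d_sum: "d (sum h A) = (\<Sum>x\<in>A. d (h x))" for h :: "nat \<Rightarrow> 'a" and A
    by (induction A rule: infinite_finite_induct) (simp_all add: d0 add)
  have d_of_nat: "d (of_nat k) = 0" for k
    by (induction k) (simp_all add: d0 d1 add)
  show ?thesis
  proof (induction n)
    case (Suc n)
    have "(d ^^ Suc n) (a * b) = (\<Sum>i\<le>n. of_nat (n choose i) *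
        ((d ^^ Suc i) a * (d ^^ (n - i)) b + (d ^^ i) a * (d ^^ Suc (n - i)) b))"
      by (simp add: Suc.IH d_sum mult d_of_nat algebra_simps)
    also have "\<dots> = (\<Sum>i\<le>Suc n. of_nat (Suc n choose i) * ((d ^^ i) a * (d ^^ (Suc n - i)) b))"
      by (rule sum_choose_Suc_convolution)
    finally show ?case .
  qed simp
qed

lemma fps_eq_0_if_deriv_eq_mult:
  fixes D C :: "'a::field_char_0 fps"
  assumes "fps_deriv D = C * D" "fps_nth D 0 = 0"
  shows "D = 0"
proof -
  have "\<forall>m\<le>n. fps_nth D m = 0" for n
  proof (induction n)
    case (Suc n)
    have "of_nat (Suc n) * fps_nth D (Suc n) = fps_nth (C * D) n"
      by (simp flip: assms(1))
    also have "\<dots> = 0"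
      using Suc.IH by (simp add: fps_mult_nth)
    finally have "fps_nth D (Suc n) = 0"
      by (simp del: of_nat_Suc)
    then show ?case
      using Suc.IH le_Suc_eq by auto
  qed (use assms(2) in simp)
  then show ?thesis
    by (intro fps_ext) auto
qed

lemma fps_riccati_unique:
  fixes y z :: "'a::field_char_0 fps"
  assumes "fps_deriv y = 1 + y\<^sup>2" "fps_deriv z = 1 + z\<^sup>2" "fps_nth y 0 = fps_nth z 0"
  shows "y = z"
proof -
  have "fps_deriv (y - z) = (y + z) * (y - z)"
    by (simp add: assms(1,2) power2_eq_square algebra_simps)
  then have "y - z = 0"
    by (rule fps_eq_0_if_deriv_eq_mult) (simp add: assms(3))
  then show ?thesis
    by simp
qed

definition fps_sec :: "'a::field_char_0 \<Rightarrow> 'a fps" where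
  "fps_sec c = inverse (fps_cos c)"

lemma fps_sec_mult_cos: "fps_sec c * fps_cos c = 1"
  by (simp add: fps_sec_def inverse_mult_eq_1)

lemma fps_tan_eq_sin_mult_sec: "fps_tan c = fps_sin c * fps_sec c"
  by (simp add: fps_tan_def fps_sec_def fps_divide_unit)

lemma fps_sec_squared: "(fps_sec c)\<^sup>2 = 1 + (fps_tan c)\<^sup>2"
proof -
  have "(fps_sec c)\<^sup>2 = (fps_sec c)\<^sup>2 * ((fps_cos c)\<^sup>2 + (fps_sin c)\<^sup>2)"
    by (simp add: fps_sin_cos_sum_of_squares)
  also have "\<dots> = (fps_sec c * fps_cos c)\<^sup>2 + (fps_tan c)\<^sup>2"
    by (simp add: fps_tan_eq_sin_mult_sec power2_eq_square algebra_simps)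
  finally show ?thesis
    by (simp add: fps_sec_mult_cos)
qed

lemma fps_deriv_fps_sec: "fps_deriv (fps_sec c) = fps_const c * fps_sec c * fps_tan c"
proof -
  have "fps_deriv (fps_sec c) = - fps_deriv (fps_cos c) * (fps_sec c)\<^sup>2"
    by (simp add: fps_sec_def fps_inverse_deriv)
  then show ?thesis
    by (simp add: fps_cos_deriv fps_tan_eq_sin_mult_sec power2_eq_square algebra_simps
        flip: fps_const_neg)
qed

lemma fps_deriv_fps_tan: "fps_deriv (fps_tan c) = fps_const c * (1 + (fps_tan c)\<^sup>2)"
proof -
  have "inverse ((fps_cos c)\<^sup>2) = (fps_sec c)\<^sup>2"
    by (simp add: fps_sec_def fps_inverse_power)
  then show ?thesis
    by (simp add: fps_tan_deriv fps_divide_unit flip: fps_sec_squared)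
qed

lemma fps_sin_compose_linear: "fps_sin c oo (fps_const d * fps_X) = fps_sin (d * c)"
  by (simp add: fps_compose_linear fps_sin_def fps_eq_iff power_mult_distrib)

lemma fps_cos_compose_linear: "fps_cos c oo (fps_const d * fps_X) = fps_cos (d * c)"
  by (simp add: fps_compose_linear fps_cos_def fps_eq_iff power_mult_distrib)

lemma fps_sec_compose_linear: "fps_sec c oo (fps_const d * fps_X) = fps_sec (d * c)"
  by (simp add: fps_sec_def fps_inverse_compose fps_cos_compose_linear)

lemma fps_tan_compose_linear: "fps_tan c oo (fps_const d * fps_X) = fps_tan (d * c)"
  by (simp add: fps_tan_def fps_divide_compose fps_sin_compose_linear fps_cos_compose_linear)

lemma fps_tan_nth_even:
  assumes "even n"
  shows "fps_nth (fps_tan c) n = 0"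
proof -
  have "fps_tan (- c) = - fps_tan c"
    by (simp add: fps_tan_eq_sin_mult_sec fps_sec_def fps_sin_even fps_cos_odd)
  moreover have "fps_nth (fps_tan (- c)) n = fps_nth (fps_tan c) n"
    using fps_nth_compose_linear[of "fps_tan c" "-1" n] assms
    by (simp add: fps_tan_compose_linear)
  ultimately have "fps_nth (fps_tan c) n = - fps_nth (fps_tan c) n"
    by simp
  then show ?thesis
    by simp
qed

lemma fps_sec_nth_odd:
  assumes "odd n"
  shows "fps_nth (fps_sec c) n = 0"
proof -
  have "fps_sec (- c) = fps_sec c"
    by (simp add: fps_sec_def fps_cos_odd)
  then have "fps_nth (fps_sec c) n = - fps_nth (fps_sec c) n"
    using fps_nth_compose_linear[of "fps_sec c" "-1" n] assms
    by (simp add: fps_sec_compose_linear)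
  then show ?thesis
    by simp
qed

definition fps_of_real :: "real fps \<Rightarrow> 'a::real_algebra_1 fps" where
  "fps_of_real F = Abs_fps (\<lambda>n. of_real (fps_nth F n))"

lemma fps_of_real_nth [simp]: "fps_nth (fps_of_real F) n = of_real (fps_nth F n)"
  by (simp add: fps_of_real_def)

lemma fps_of_real_add [simp]: "fps_of_real (F + G) = fps_of_real F + fps_of_real G"
  by (rule fps_ext) simp

lemma fps_of_real_diff [simp]: "fps_of_real (F - G) = fps_of_real F - fps_of_real G"
  by (rule fps_ext) simp

lemma fps_of_real_mult [simp]: "fps_of_real (F * G) = fps_of_real F * fps_of_real G"
  by (rule fps_ext) (simp add: fps_mult_nth)

lemma fps_of_real_const [simp]: "fps_of_real (fps_const c) = fps_const (of_real c)"
  by (rule fps_ext) simp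

lemma fps_of_real_1 [simp]: "fps_of_real 1 = 1"
  by (rule fps_ext) simp

lemma fps_of_real_X [simp]: "fps_of_real fps_X = fps_X"
  by (rule fps_ext) (simp add: fps_X_def)

lemma fps_of_real_fps_exp [simp]: "fps_of_real (fps_exp c) = fps_exp (of_real c :: 'a::real_field)"
  by (rule fps_ext) (simp add: of_real_divide of_real_power)

lemma fps_of_real_inverse:
  fixes F :: "real fps"
  assumes "fps_nth F 0 \<noteq> 0"
  shows "fps_of_real (inverse F) = (inverse (fps_of_real F) :: 'a::real_field fps)"
proof -
  have "fps_of_real F * fps_of_real (inverse F) = (1 :: 'a fps)"
    using assms by (simp flip: fps_of_real_mult add: inverse_mult_eq_1')
  then show ?thesis
    using assms by (metis fps_inverse_unique fps_of_real_nth mult.commute of_real_eq_0_iff)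
qed

lemma fps_of_real_fps_sin [simp]: "fps_of_real (fps_sin c) = (fps_sin (of_real c) :: 'a::real_field fps)"
  by (rule fps_ext) (simp add: fps_sin_def of_real_divide of_real_power)

lemma fps_of_real_fps_cos [simp]: "fps_of_real (fps_cos c) = (fps_cos (of_real c) :: 'a::real_field fps)"
  by (rule fps_ext) (simp add: fps_cos_def of_real_divide of_real_power)

lemma fps_of_real_fps_sec [simp]: "fps_of_real (fps_sec c) = (fps_sec (of_real c) :: 'a::real_field fps)"
  by (simp add: fps_sec_def fps_of_real_inverse)

lemma fps_of_real_fps_tan [simp]: "fps_of_real (fps_tan c) = (fps_tan (of_real c) :: 'a::real_field fps)"
  by (simp add: fps_tan_eq_sin_mult_sec)

lemma bernoulli_egf_mult_exp_minus_1: "fps_X / (fps_exp (1::real) - 1) * (fps_exp 1 - 1) = fps_X"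
proof (rule fps_times_divide_eq)
  have "fps_nth (fps_exp (1::real) - 1) 1 \<noteq> 0"
    by simp
  then show "fps_exp (1::real) - 1 \<noteq> 0"
    by auto
  show "subdegree (fps_exp (1::real) - 1) \<le> subdegree (fps_X :: real fps)"
    by (rule subdegree_leI) simp
qed

lemma bernoulli_egf_compose_linear:
  defines "\<beta> \<equiv> fps_of_real (fps_X / (fps_exp 1 - 1)) :: complex fps"
  shows "(\<beta> oo (fps_const c * fps_X)) * (fps_exp c - 1) = fps_const c * fps_X"
proof -
  have "\<beta> * (fps_exp 1 - 1) = fps_X"
    using arg_cong[OF bernoulli_egf_mult_exp_minus_1, of "fps_of_real :: _ \<Rightarrow> complex fps"]
    by (simp add: \<beta>_def)
  then have "(\<beta> * (fps_exp 1 - 1)) oo (fps_const c * fps_X) = fps_const c * fps_X"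
    by simp
  then show ?thesis
    by (simp add: fps_compose_mult_distrib fps_compose_sub_distrib)
qed

lemma fps_tan_1_mult_exp:
  "fps_tan 1 * (fps_const \<i> * (fps_exp (2 * \<i>) + 1)) = fps_exp (2 * \<i>) - 1"
proof -
  have exp_ii: "fps_exp \<i> * fps_exp \<i> = fps_exp (2 * \<i>)" "fps_exp \<i> * fps_exp (- \<i>) = 1"
    by (simp_all flip: fps_exp_add_mult)
  have "fps_tan 1 * (fps_const \<i> * (fps_exp \<i> + fps_exp (- \<i>))) = fps_exp \<i> - fps_exp (- \<i>)"
    using fps_tan_fps_exp_ii[of 1] by (simp add: fps_divide_unit inverse_mult_eq_1)
  then show ?thesis
    by (metis (no_types, lifting) exp_ii mult.left_commute right_diff_distrib distrib_left)
qed

text \<open>Here \<open>\<beta>(t) = t / (e^t - 1)\<close>; the identity is the partial fraction decomposition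
  \<open>(q - 1)/(q + 1) = 1 - 2/(q - 1) + 4/(q^2 - 1)\<close> at \<open>q = e^(2it)\<close>.\<close>
lemma fps_X_mult_fps_tan:
  defines "\<beta> \<equiv> fps_of_real (fps_X / (fps_exp 1 - 1)) :: complex fps"
  shows "fps_X * fps_tan 1 = fps_const (- \<i>) * fps_X
    + (\<beta> oo (fps_const (2 * \<i>) * fps_X)) - (\<beta> oo (fps_const (4 * \<i>) * fps_X))"
    (is "_ = ?rhs")
proof -
  define Q where "Q = fps_exp (2 * \<i>)"
  have Q4: "fps_exp (4 * \<i>) = Q * Q"
    by (simp add: Q_def flip: fps_exp_add_mult)
  have tan: "fps_tan 1 * (fps_const \<i> * (Q + 1)) = Q - 1"
    unfolding Q_def by (rule fps_tan_1_mult_exp)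
  have b2: "(\<beta> oo (fps_const (2 * \<i>) * fps_X)) * (Q - 1) = fps_const (2 * \<i>) * fps_X"
    using bernoulli_egf_compose_linear[of "2 * \<i>"] by (simp add: \<beta>_def Q_def)
  have b4: "(\<beta> oo (fps_const (4 * \<i>) * fps_X)) * (Q * Q - 1) = fps_const (4 * \<i>) * fps_X"
    using bernoulli_egf_compose_linear[of "4 * \<i>"] by (simp add: \<beta>_def Q4)
  have const_prods: "fps_const (- \<i>) * fps_const \<i> = 1" "fps_const \<i> * fps_const (2 * \<i>) = - 2"
    "fps_const \<i> * fps_const (4 * \<i>) = - 4"
    by (simp_all add: fps_numeral_fps_const)
  have "fps_X * fps_tan 1 * (fps_const \<i> * (Q * Q - 1)) =
      fps_X * (fps_tan 1 * (fps_const \<i> * (Q + 1))) * (Q - 1)"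
    by (simp add: algebra_simps)
  also have "\<dots> = fps_X * (Q * Q - 1) - 2 * (fps_X * (Q + 1)) + 4 * fps_X"
    unfolding tan by (simp add: algebra_simps)
  also have "\<dots> = fps_const (- \<i>) * fps_const \<i> * fps_X * (Q * Q - 1)
      + fps_const \<i> * ((\<beta> oo (fps_const (2 * \<i>) * fps_X)) * (Q - 1)) * (Q + 1)
      - fps_const \<i> * ((\<beta> oo (fps_const (4 * \<i>) * fps_X)) * (Q * Q - 1))"
    unfolding b2 b4 mult.assoc[symmetric] const_prods by (simp add: algebra_simps)
  also have "\<dots> = ?rhs * (fps_const \<i> * (Q * Q - 1))"
    by (simp add: algebra_simps)
  finally have "fps_X * fps_tan 1 * (fps_const \<i> * (Q * Q - 1)) = ?rhs * (fps_const \<i> * (Q * Q - 1))" .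
  moreover have "fps_const \<i> * (Q * Q - 1) \<noteq> 0"
  proof
    assume "fps_const \<i> * (Q * Q - 1) = 0"
    then have "fps_nth (fps_const \<i> * (fps_exp (4 * \<i>) - 1)) 1 = 0"
      by (simp add: Q4)
    then show False
      by simp
  qed
  ultimately show ?thesis
    by simp
qed

lemma fps_tan_nth_bernoulli:
  assumes "n \<ge> 1"
  shows "fps_nth (fps_tan (1::complex)) n =
    ((2 * \<i>) ^ Suc n - (4 * \<i>) ^ Suc n) * of_real (bernoulli_num (Suc n) / fact (Suc n))"
proof -
  have "fps_nth (fps_tan (1::complex)) n = fps_nth (fps_X * fps_tan 1) (Suc n)"
    by simp
  also have "\<dots> = ((2 * \<i>) ^ Suc n - (4 * \<i>) ^ Suc n) *
      of_real (fps_nth (fps_X / (fps_exp 1 - 1)) (Suc n))"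
    unfolding fps_X_mult_fps_tan fps_add_nth fps_sub_nth fps_nth_compose_linear
    using assms by (simp add: power_mult_distrib algebra_simps)
  finally show ?thesis
    by (simp add: bernoulli_num_def)
qed

lemma abs_fps_tan_nth:
  assumes "n \<ge> 1"
  shows "\<bar>fps_nth (fps_tan (1::real)) n\<bar> = (4 ^ Suc n - 2 ^ Suc n) * \<bar>bernoulli_num (Suc n)\<bar> / fact (Suc n)"
proof -
  have "of_real (fps_nth (fps_tan 1) n) = fps_nth (fps_tan (1::complex)) n"
    using fps_of_real_nth[of "fps_tan 1" n, where 'a = complex] by simp
  also have "\<dots> = \<i> ^ Suc n * of_real ((2 ^ Suc n - 4 ^ Suc n) * (bernoulli_num (Suc n) / fact (Suc n)))"
    unfolding fps_tan_nth_bernoulli[OF assms] by (simp add: power_mult_distrib algebra_simps)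
  finally have "\<bar>fps_nth (fps_tan 1) n\<bar> = \<bar>(2 ^ Suc n - 4 ^ Suc n) * (bernoulli_num (Suc n) / fact (Suc n))\<bar>"
    by (metis norm_of_real norm_mult norm_power norm_ii power_one mult_1)
  moreover have "(2::real) ^ Suc n \<le> 4 ^ Suc n"
    by (intro power_mono) auto
  ultimately show ?thesis
    by (simp add: abs_mult)
qed

lemma fps_cos_eq_cosh_compose: "fps_cos (1::complex) = fps_of_real fps_cosh_real oo (fps_const \<i> * fps_X)"
proof (rule fps_ext)
  fix n
  show "fps_nth (fps_cos (1::complex)) n = fps_nth (fps_of_real fps_cosh_real oo (fps_const \<i> * fps_X)) n"
    by (cases "even n") (auto simp: fps_cos_def fps_cosh_real_def power_mult elim!: evenE)
qed

lemma fps_sec_nth_euler: "fps_nth (fps_sec (1::complex)) n = \<i> ^ n * of_real (euler_num n / fact n)"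
proof -
  have "fps_sec (1::complex) = inverse (fps_of_real fps_cosh_real) oo (fps_const \<i> * fps_X)"
    by (simp add: fps_sec_def fps_cos_eq_cosh_compose fps_inverse_compose fps_cosh_real_def)
  then show ?thesis
    by (simp add: euler_num_def fps_of_real_inverse fps_cosh_real_def flip: fps_of_real_nth)
qed

lemma abs_fps_sec_nth: "\<bar>fps_nth (fps_sec (1::real)) n\<bar> = \<bar>euler_num n\<bar> / fact n"
proof -
  have "of_real (fps_nth (fps_sec 1) n) = fps_nth (fps_sec (1::complex)) n"
    using fps_of_real_nth[of "fps_sec 1" n, where 'a = complex] by simp
  also have "\<dots> = \<i> ^ n * of_real (euler_num n / fact n)"
    by (rule fps_sec_nth_euler)
  finally have "\<bar>fps_nth (fps_sec 1) n\<bar> = \<bar>euler_num n / fact n\<bar>"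
    by (metis norm_of_real norm_mult norm_power norm_ii power_one mult_1)
  then show ?thesis
    by simp
qed

text \<open>Since \<open>tan' = 1 + tan^2\<close>, the \<open>n\<close>-th derivative of \<open>tan\<close> is \<open>P_n \<circ> tan\<close> for these \<open>P_n\<close>.\<close>
fun tan_deriv_poly :: "nat \<Rightarrow> real poly" where
  "tan_deriv_poly 0 = [:0, 1:]"
| "tan_deriv_poly (Suc n) = pderiv (tan_deriv_poly n) * [:1, 0, 1:]"

lemma tan_deriv_poly_Suc_conv:
  "tan_deriv_poly (Suc n) = (if n = 0 then 1 else 0) +
     (\<Sum>i\<le>n. of_nat (n choose i) * (tan_deriv_poly i * tan_deriv_poly (n - i)))"
proof -
  define D :: "real poly \<Rightarrow> real poly" where "D q = pderiv q * [:1, 0, 1:]" for q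
  have D_add: "D (p + q) = D p + D q" for p q
    by (simp add: D_def pderiv_add algebra_simps)
  have D_mult: "D (p * q) = D p * q + p * D q" for p q
    by (simp add: D_def pderiv_mult algebra_simps)
  have Dn_add: "(D ^^ k) (p + q) = (D ^^ k) p + (D ^^ k) q" for k p q
    by (induction k) (simp_all add: D_add)
  have Dn_1: "(D ^^ k) 1 = (if k = 0 then 1 else 0)" for k
  proof (induction k)
    case (Suc k)
    have "D 0 = 0" "D 1 = 0" by (simp_all add: D_def)
    with Suc show ?case by simp
  qed simp
  have P_eq: "tan_deriv_poly k = (D ^^ k) [:0, 1:]" for k
    by (induction k) (simp_all add: D_def)
  have "D [:0, 1:] = 1 + [:0, 1:] * [:0, 1:]"
    by (simp add: D_def pderiv_pCons one_pCons)
  then have "tan_deriv_poly (Suc n) = (D ^^ n) 1 + (D ^^ n) ([:0, 1:] * [:0, 1:])"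
    by (simp add: P_eq funpow_Suc_right Dn_add del: funpow.simps)
  also have "(D ^^ n) ([:0, 1:] * [:0, 1:]) =
      (\<Sum>i\<le>n. of_nat (n choose i) * ((D ^^ i) [:0, 1:] * (D ^^ (n - i)) [:0, 1:]))"
    by (rule derivation_funpow_mult[OF D_add D_mult])
  finally show ?thesis
    by (simp only: Dn_1 P_eq)
qed

lemma poly_tan_deriv_poly_Suc:
  "poly (tan_deriv_poly (Suc n)) c = (if n = 0 then 1 else 0) +
     (\<Sum>i\<le>n. real (n choose i) * (poly (tan_deriv_poly i) c * poly (tan_deriv_poly (n - i)) c))"
  by (subst tan_deriv_poly_Suc_conv) (simp add: poly_sum)

lemma poly_tan_deriv_poly_nonneg: "0 \<le> c \<Longrightarrow> 0 \<le> poly (tan_deriv_poly n) c"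
proof (induction n rule: less_induct)
  case (less n)
  show ?case
  proof (cases n)
    case (Suc m)
    with less have "0 \<le> (\<Sum>i\<le>m. real (m choose i) *
        (poly (tan_deriv_poly i) c * poly (tan_deriv_poly (m - i)) c))"
      by (intro sum_nonneg mult_nonneg_nonneg) auto
    then show ?thesis
      unfolding Suc poly_tan_deriv_poly_Suc by simp
  qed (use less.prems in simp)
qed

definition tan_deriv_egf :: "real \<Rightarrow> real fps" where
  "tan_deriv_egf c = Abs_fps (\<lambda>n. poly (tan_deriv_poly n) c / fact n)"

lemma tan_deriv_egf_nth: "fps_nth (tan_deriv_egf c) n = poly (tan_deriv_poly n) c / fact n"
  by (simp add: tan_deriv_egf_def)

lemma fps_deriv_tan_deriv_egf: "fps_deriv (tan_deriv_egf c) = 1 + (tan_deriv_egf c)\<^sup>2"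
proof (rule fps_ext)
  fix n
  have "fps_nth (fps_deriv (tan_deriv_egf c)) n = poly (tan_deriv_poly (Suc n)) c / fact n"
    by (simp add: tan_deriv_egf_nth fact_Suc del: tan_deriv_poly.simps of_nat_Suc)
  also have "\<dots> = (if n = 0 then 1 else 0) + (\<Sum>i\<le>n.
      poly (tan_deriv_poly i) c / fact i * (poly (tan_deriv_poly (n - i)) c / fact (n - i)))"
    unfolding poly_tan_deriv_poly_Suc add_divide_distrib sum_divide_distrib
    by (intro arg_cong2[where f = "(+)"] sum.cong) (auto simp: binomial_fact field_simps)
  also have "\<dots> = fps_nth (1 + (tan_deriv_egf c)\<^sup>2) n"
    by (simp add: power2_eq_square fps_mult_nth tan_deriv_egf_nth atLeast0AtMost)
  finally show "fps_nth (fps_deriv (tan_deriv_egf c)) n = fps_nth (1 + (tan_deriv_egf c)\<^sup>2) n" .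
qed

lemma tan_deriv_egf_0: "tan_deriv_egf 0 = fps_tan 1"
  by (rule fps_riccati_unique)
    (simp_all add: fps_deriv_tan_deriv_egf fps_deriv_fps_tan tan_deriv_egf_nth fps_tan_nth_even)

lemma tan_deriv_egf_1: "tan_deriv_egf 1 = fps_sec 2 + fps_tan 2"
proof (rule fps_riccati_unique)
  have "fps_deriv (fps_sec 2 + fps_tan (2::real)) = 2 * fps_sec 2 * fps_tan 2 + 2 * (1 + (fps_tan 2)\<^sup>2)"
    by (simp add: fps_deriv_fps_sec fps_deriv_fps_tan fps_numeral_fps_const)
  also have "\<dots> = 1 + (fps_sec 2 + fps_tan 2)\<^sup>2"
    by (simp add: power2_sum fps_sec_squared algebra_simps)
  finally show "fps_deriv (fps_sec 2 + fps_tan (2::real)) = 1 + (fps_sec 2 + fps_tan 2)\<^sup>2" .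
qed (simp_all add: fps_deriv_tan_deriv_egf tan_deriv_egf_nth fps_tan_nth_even fps_sec_def)

lemma poly_tan_deriv_poly_at_0: "poly (tan_deriv_poly n) 0 = fact n * fps_nth (fps_tan 1) n"
  using arg_cong[OF tan_deriv_egf_0, of "\<lambda>F. fps_nth F n"] by (simp add: tan_deriv_egf_nth field_simps)

lemma poly_tan_deriv_poly_at_1:
  "poly (tan_deriv_poly n) 1 = 2 ^ n * fact n * (fps_nth (fps_sec 1) n + fps_nth (fps_tan 1) n)"
proof -
  have "fps_nth (fps_sec 2 + fps_tan 2) n = fps_nth (fps_sec 1 oo (fps_const 2 * fps_X)) n +
      fps_nth (fps_tan (1::real) oo (fps_const 2 * fps_X)) n"
    by (simp add: fps_sec_compose_linear fps_tan_compose_linear)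
  also have "\<dots> = 2 ^ n * (fps_nth (fps_sec 1) n + fps_nth (fps_tan 1) n)"
    by (simp only: fps_nth_compose_linear) (simp add: algebra_simps)
  finally show ?thesis
    using arg_cong[OF tan_deriv_egf_1, of "\<lambda>F. fps_nth F n"] by (simp add: tan_deriv_egf_nth field_simps)
qed

lemma poly_tan_deriv_poly_0_bernoulli:
  assumes "n \<ge> 1"
  shows "poly (tan_deriv_poly n) 0 = (4 ^ Suc n - 2 ^ Suc n) * \<bar>bernoulli_num (Suc n)\<bar> / Suc n"
proof -
  have "0 \<le> fact n * fps_nth (fps_tan (1::real)) n"
    using poly_tan_deriv_poly_nonneg[of 0 n] by (simp add: poly_tan_deriv_poly_at_0)
  then have "0 \<le> fps_nth (fps_tan (1::real)) n"
    by (metis fact_gt_zero zero_le_mult_iff not_less)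
  then have "poly (tan_deriv_poly n) 0 = fact n * \<bar>fps_nth (fps_tan (1::real)) n\<bar>"
    by (simp add: poly_tan_deriv_poly_at_0)
  also have "\<dots> = fact n * ((4 ^ Suc n - 2 ^ Suc n) * \<bar>bernoulli_num (Suc n)\<bar> / (real (Suc n) * fact n))"
    by (simp only: abs_fps_tan_nth[OF assms] fact_Suc)
  finally show ?thesis
    by simp
qed

lemma poly_tan_deriv_poly_0_even: "even n \<Longrightarrow> poly (tan_deriv_poly n) 0 = 0"
  by (simp add: poly_tan_deriv_poly_at_0 fps_tan_nth_even)

lemma poly_tan_deriv_poly_1_odd: "odd n \<Longrightarrow> poly (tan_deriv_poly n) 1 = 2 ^ n * poly (tan_deriv_poly n) 0"
  by (simp add: poly_tan_deriv_poly_at_1 poly_tan_deriv_poly_at_0 fps_sec_nth_odd)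

lemma poly_tan_deriv_poly_1_even:
  assumes "even n"
  shows "poly (tan_deriv_poly n) 1 = 2 ^ n * \<bar>euler_num n\<bar>"
proof -
  have P1: "poly (tan_deriv_poly n) 1 = 2 ^ n * fact n * fps_nth (fps_sec 1) n"
    using assms by (simp add: poly_tan_deriv_poly_at_1 fps_tan_nth_even)
  have "0 \<le> (2 ^ n * fact n) * fps_nth (fps_sec (1::real)) n"
    using poly_tan_deriv_poly_nonneg[of 1 n] by (simp add: P1)
  then have "0 \<le> fps_nth (fps_sec (1::real)) n"
    by (metis fact_gt_zero zero_less_power zero_less_numeral mult_pos_pos zero_le_mult_iff not_less)
  then show ?thesis
    using abs_fps_sec_nth[of n] by (simp add: P1)
qed

lemma tan_deriv_poly_defect_even:
  assumes "even n"
  shows "(2 * poly (tan_deriv_poly (Suc n)) 1 - poly (tan_deriv_poly (Suc n)) 0) / 2 ^ Suc n =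
    2 / real (n + 2) * (2 ^ (n + 2) - 1)\<^sup>2 * \<bar>bernoulli_num (n + 2)\<bar>"
proof -
  define t :: real where "t = 2 ^ Suc n"
  define a where "a = poly (tan_deriv_poly (Suc n)) 0"
  have "t > 0"
    by (simp add: t_def)
  have a: "a = (4 * t * t - 2 * t) * \<bar>bernoulli_num (n + 2)\<bar> / real (n + 2)"
    using poly_tan_deriv_poly_0_bernoulli[of "Suc n"] power_mult_distrib[of "2::real" 2 "Suc (Suc n)"]
    by (simp add: a_def t_def del: tan_deriv_poly.simps)
  have "poly (tan_deriv_poly (Suc n)) 1 = t * a"
    using assms by (simp add: a_def t_def poly_tan_deriv_poly_1_odd del: tan_deriv_poly.simps)
  then have "(2 * poly (tan_deriv_poly (Suc n)) 1 - poly (tan_deriv_poly (Suc n)) 0) / 2 ^ Suc n =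
      (2 * t - 1) * a / t"
    by (simp add: a_def t_def algebra_simps del: tan_deriv_poly.simps)
  also have "\<dots> = 2 / real (n + 2) * (2 * t - 1)\<^sup>2 * \<bar>bernoulli_num (n + 2)\<bar>"
    unfolding a using \<open>t > 0\<close> by (simp add: divide_simps power2_eq_square) (simp add: algebra_simps)
  also have "2 * t = 2 ^ (n + 2)"
    by (simp add: t_def)
  finally show ?thesis .
qed

lemma tan_deriv_poly_defect_odd:
  assumes "odd n"
  shows "(2 * poly (tan_deriv_poly (Suc n)) 1 - poly (tan_deriv_poly (Suc n)) 0) / 2 ^ Suc n =
    2 * \<bar>euler_num (n + 1)\<bar>"
  using assms by (simp add: poly_tan_deriv_poly_1_even poly_tan_deriv_poly_0_even del: tan_deriv_poly.simps)

lemma convex_on_cong: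
  assumes "\<And>x. x \<in> S \<Longrightarrow> f x = g x"
  shows "convex_on S f \<longleftrightarrow> convex_on S g"
  using assms by (auto simp: convex_on_def convex_def)

lemma convex_on_secant_half_le:
  fixes f :: "real \<Rightarrow> real"
  assumes f: "convex_on {0<..a} f" and s: "0 < s" "s \<le> a"
  shows "2 * (f (a / 2) - f (s / 2)) \<le> f a - f s"
proof (cases "s = a")
  case False
  with s have lt: "s / 2 < a / 2" "a / 2 < a" "s / 2 < s" "s < a"
    by auto
  have "2 * (f (a / 2) - f (s / 2)) / (a - s) = (f (s / 2) - f (a / 2)) / (s / 2 - a / 2)"
    using lt by (simp add: field_simps)
  also have "\<dots> \<le> (f (s / 2) - f a) / (s / 2 - a)"
    using convex_on_slope_le(1)[OF f _ _ lt(1,2)] s lt by auto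
  also have "\<dots> \<le> (f s - f a) / (s - a)"
    using convex_on_slope_le(2)[OF f _ _ lt(3,4)] s lt by auto
  also have "\<dots> = (f a - f s) / (a - s)"
    using lt by (simp add: field_simps)
  finally show ?thesis
    using lt by (simp add: divide_le_cancel)
qed simp

lemma convex_on_defect_greatest_lower_bound:
  fixes f :: "real \<Rightarrow> real"
  assumes f: "convex_on {0<..a} f" and "0 < a"
  shows "(\<forall>x y. 0 < x \<and> 0 < y \<and> x + y \<le> a \<longrightarrow> 2 * f (a / 2) - f a \<le> f x + f y - f (x + y)) \<and>
    (\<forall>c. (\<forall>x y. 0 < x \<and> 0 < y \<and> x + y \<le> a \<longrightarrow> c \<le> f x + f y - f (x + y)) \<longrightarrow>
      c \<le> 2 * f (a / 2) - f a)"
proof (intro conjI allI impI; (elim conjE)?)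
  fix x y :: real
  assume xy: "0 < x" "0 < y" "x + y \<le> a"
  have "f ((x + y) / 2) \<le> (1 - 1 / 2) * f x + 1 / 2 * f y"
    using convex_onD[OF f, of "1 / 2" x y] xy by (simp add: field_simps)
  moreover have "2 * (f (a / 2) - f ((x + y) / 2)) \<le> f a - f (x + y)"
    using xy by (intro convex_on_secant_half_le[OF f]) auto
  ultimately show "2 * f (a / 2) - f a \<le> f x + f y - f (x + y)"
    by simp
next
  fix c
  assume "\<forall>x y. 0 < x \<and> 0 < y \<and> x + y \<le> a \<longrightarrow> c \<le> f x + f y - f (x + y)"
  then show "c \<le> 2 * f (a / 2) - f a"
    using \<open>0 < a\<close> by (auto dest!: spec[of _ "a / 2"])
qed

lemma sin_half_pos: "0 < x \<Longrightarrow> x < 2 * pi \<Longrightarrow> 0 < sin (x / 2)"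
  by (intro sin_gt_zero) auto

lemma cot_half_nonneg: "0 < x \<Longrightarrow> x \<le> pi \<Longrightarrow> 0 \<le> cot (x / 2)"
  unfolding cot_def by (intro divide_nonneg_pos cos_ge_zero sin_half_pos) auto

lemma has_real_derivative_poly_tan_deriv_poly_cot_half:
  assumes "sin (x / 2) \<noteq> 0"
  shows "((\<lambda>x. poly (tan_deriv_poly n) (cot (x / 2))) has_real_derivative
    - poly (tan_deriv_poly (Suc n)) (cot (x / 2)) / 2) (at x)"
proof -
  have cot_sq: "1 + (cot (x / 2))\<^sup>2 = inverse ((sin (x / 2))\<^sup>2)"
    using assms by (simp add: cot_def field_simps sin_cos_squared_add)
  have P_Suc: "poly (tan_deriv_poly (Suc n)) (cot (x / 2)) =
      poly (pderiv (tan_deriv_poly n)) (cot (x / 2)) * inverse ((sin (x / 2))\<^sup>2)"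
    by (simp only: tan_deriv_poly.simps poly_mult flip: cot_sq) (simp add: power2_eq_square algebra_simps)
  have "((\<lambda>x. cot (x / 2)) has_real_derivative - inverse ((sin (x / 2))\<^sup>2) * (1 / 2)) (at x)"
    by (rule DERIV_chain2[where g = "\<lambda>x. x / 2", OF DERIV_cot[OF assms]])
      (auto intro!: derivative_eq_intros)
  then have "((\<lambda>x. poly (tan_deriv_poly n) (cot (x / 2))) has_real_derivative
      poly (pderiv (tan_deriv_poly n)) (cot (x / 2)) * (- inverse ((sin (x / 2))\<^sup>2) * (1 / 2))) (at x)"
    by (rule DERIV_chain2[OF poly_DERIV])
  then show ?thesis
    unfolding P_Suc by (rule DERIV_cong) simp
qed

lemma g_fun_eq_poly_cot_half:
  assumes "0 < x" "x < 2 * pi"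
  shows "g_fun x = poly (tan_deriv_poly 1) (cot (x / 2)) / 2"
proof -
  have "sin (x / 2) \<noteq> 0"
    using sin_half_pos[OF assms] by simp
  moreover have "cos x = 1 - 2 * (sin (x / 2) * sin (x / 2))"
    using cos_double_sin[of "x / 2"] by (simp add: power2_eq_square)
  ultimately show ?thesis
    by (simp add: g_fun_def pderiv_pCons cot_def field_simps sin_cos_squared_add)
qed

lemma higher_deriv_g_fun:
  assumes "0 < x" "x < 2 * pi"
  shows "(deriv ^^ n) g_fun x = (-1) ^ n * poly (tan_deriv_poly (Suc n)) (cot (x / 2)) / 2 ^ Suc n"
  using assms
proof (induction n arbitrary: x)
  case 0
  then show ?case
    by (simp add: g_fun_eq_poly_cot_half del: tan_deriv_poly.simps)
next
  case (Suc n)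
  have "sin (x / 2) \<noteq> 0"
    using sin_half_pos[OF Suc.prems] by simp
  then have "((\<lambda>x. (-1) ^ n * poly (tan_deriv_poly (Suc n)) (cot (x / 2)) / 2 ^ Suc n) has_real_derivative
      (-1) ^ n * (- poly (tan_deriv_poly (Suc (Suc n))) (cot (x / 2)) / 2) / 2 ^ Suc n) (at x)"
    by (intro DERIV_cdivide DERIV_cmult has_real_derivative_poly_tan_deriv_poly_cot_half)
  then have "((\<lambda>x. (-1) ^ n * poly (tan_deriv_poly (Suc n)) (cot (x / 2)) / 2 ^ Suc n) has_real_derivative
      (-1) ^ Suc n * poly (tan_deriv_poly (Suc (Suc n))) (cot (x / 2)) / 2 ^ Suc (Suc n)) (at x)"
    by (rule DERIV_cong) (simp del: tan_deriv_poly.simps)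
  then have "((deriv ^^ n) g_fun has_real_derivative
      (-1) ^ Suc n * poly (tan_deriv_poly (Suc (Suc n))) (cot (x / 2)) / 2 ^ Suc (Suc n)) (at x)"
    by (rule has_field_derivative_transform_within_open[where S = "{0<..<2 * pi}"])
      (use Suc in auto)
  then show ?case
    by (simp add: DERIV_imp_deriv)
qed

lemma signed_higher_deriv_g_fun:
  assumes "0 < x" "x < 2 * pi"
  shows "(-1) ^ n * (deriv ^^ n) g_fun x = poly (tan_deriv_poly (Suc n)) (cot (x / 2)) / 2 ^ Suc n"
proof -
  have "(-1) ^ n * (-1) ^ n = (1::real)"
    unfolding power_mult_distrib[symmetric] by simp
  then show ?thesis
    unfolding higher_deriv_g_fun[OF assms] by (simp only: mult.assoc[symmetric] times_divide_eq_right)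
qed

lemma convex_on_poly_tan_deriv_poly_cot_half:
  "convex_on {0<..pi} (\<lambda>x. poly (tan_deriv_poly n) (cot (x / 2)))"
proof (rule convex_on_realI)
  show "connected {0<..pi}"
    by simp
  show "((\<lambda>x. poly (tan_deriv_poly n) (cot (x / 2))) has_real_derivative
      - poly (tan_deriv_poly (Suc n)) (cot (x / 2)) / 2) (at x)" if "x \<in> {0<..pi}" for x
    using that sin_half_pos[of x] pi_gt_zero
    by (intro has_real_derivative_poly_tan_deriv_poly_cot_half) auto
  show "- poly (tan_deriv_poly (Suc n)) (cot (x / 2)) / 2 \<le> - poly (tan_deriv_poly (Suc n)) (cot (y / 2)) / 2"
    if "x \<in> {0<..pi}" "y \<in> {0<..pi}" "x \<le> y" for x y
  proof (rule deriv_nonneg_imp_mono[OF _ _ \<open>x \<le> y\<close>])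
    fix z assume "z \<in> {x..y}"
    with that have z: "0 < z" "z \<le> pi"
      by auto
    have "sin (z / 2) \<noteq> 0"
      using z sin_half_pos[of z] by simp
    then show "((\<lambda>x. - poly (tan_deriv_poly (Suc n)) (cot (x / 2)) / 2) has_real_derivative
        - (- poly (tan_deriv_poly (Suc (Suc n))) (cot (z / 2)) / 2) / 2) (at z)"
      by (intro DERIV_cdivide DERIV_minus has_real_derivative_poly_tan_deriv_poly_cot_half)
    show "0 \<le> - (- poly (tan_deriv_poly (Suc (Suc n))) (cot (z / 2)) / 2) / 2"
      using poly_tan_deriv_poly_nonneg[OF cot_half_nonneg[OF z]] by (simp del: tan_deriv_poly.simps)
  qed
qed

lemma convex_on_signed_higher_deriv_g_fun:
  "convex_on {0<..pi} (\<lambda>x. (-1) ^ n * (deriv ^^ n) g_fun x)"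
proof -
  have "convex_on {0<..pi} (\<lambda>x. 1 / 2 ^ Suc n * poly (tan_deriv_poly (Suc n)) (cot (x / 2)))"
    by (intro convex_on_cmul convex_on_poly_tan_deriv_poly_cot_half) simp
  moreover have "convex_on {0<..pi} (\<lambda>x. (-1) ^ n * (deriv ^^ n) g_fun x) \<longleftrightarrow>
      convex_on {0<..pi} (\<lambda>x. 1 / 2 ^ Suc n * poly (tan_deriv_poly (Suc n)) (cot (x / 2)))"
    using pi_gt_zero by (intro convex_on_cong) (simp add: signed_higher_deriv_g_fun)
  ultimately show ?thesis
    by simp
qed

lemma signed_higher_deriv_g_fun_defect:
  "2 * ((-1) ^ n * (deriv ^^ n) g_fun (pi / 2)) - (-1) ^ n * (deriv ^^ n) g_fun pi =
    (2 * poly (tan_deriv_poly (Suc n)) 1 - poly (tan_deriv_poly (Suc n)) 0) / 2 ^ Suc n"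
proof -
  have "cot (pi / 2 / 2) = 1"
    by (simp add: cot_def sin_45 cos_45)
  then show ?thesis
    using pi_gt_zero
    by (simp add: signed_higher_deriv_g_fun cot_def diff_divide_distrib del: tan_deriv_poly.simps)
qed

theorem theorem2:
  fixes n :: nat
  shows "(even n \<longrightarrow>
      (let lam = 2 / real (n + 2) * (2 ^ (n + 2) - 1)\<^sup>2 * \<bar>bernoulli_num (n + 2)\<bar> in
        (\<forall>x y. 0 < x \<and> 0 < y \<and> x + y \<le> pi \<longrightarrow>
            lam \<le> (deriv ^^ n) g_fun x + (deriv ^^ n) g_fun y - (deriv ^^ n) g_fun (x + y)) \<and>
        (\<forall>c. (\<forall>x y. 0 < x \<and> 0 < y \<and> x + y \<le> pi \<longrightarrow>
            c \<le> (deriv ^^ n) g_fun x + (deriv ^^ n) g_fun y - (deriv ^^ n) g_fun (x + y))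
          \<longrightarrow> c \<le> lam)))
    \<and> (odd n \<longrightarrow>
      (let mu = 2 * \<bar>euler_num (n + 1)\<bar> in
        (\<forall>x y. 0 < x \<and> 0 < y \<and> x + y \<le> pi \<longrightarrow>
            mu \<le> (deriv ^^ n) g_fun (x + y) - (deriv ^^ n) g_fun x - (deriv ^^ n) g_fun y) \<and>
        (\<forall>c. (\<forall>x y. 0 < x \<and> 0 < y \<and> x + y \<le> pi \<longrightarrow>
            c \<le> (deriv ^^ n) g_fun (x + y) - (deriv ^^ n) g_fun x - (deriv ^^ n) g_fun y)
          \<longrightarrow> c \<le> mu)))"
proof (cases "even n")
  case True
  then show ?thesis
    using convex_on_defect_greatest_lower_bound[OF convex_on_signed_higher_deriv_g_fun pi_gt_zero, of n]
      signed_higher_deriv_g_fun_defect[of n] tan_deriv_poly_defect_even[OF True]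
    by (simp add: Let_def)
next
  case False
  then show ?thesis
    using convex_on_defect_greatest_lower_bound[OF convex_on_signed_higher_deriv_g_fun pi_gt_zero, of n]
      signed_higher_deriv_g_fun_defect[of n] tan_deriv_poly_defect_odd[OF False]
    by (simp add: Let_def algebra_simps)
qed

end
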